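(* For every $n\in\mathbb{N}$ and every $l\in\{0,1,\dots,8\}$ there is an outerplanar graph $G$ with $|V(G)|>n$, $|V_1(G)|=l$ and $\rho_G^4=3-\sigma_G^4$ that has no equitable $4$-coloring.
   Context: For a graph $G$, $V_1(G)$ is the set of vertices of degree $1$, and for $A\subseteq V(G)$, $\|G[A]\|$ is the number of edges of $G[A]$. Define $\rho_G^4(A)=4\|G[A]\|-5|A|+2|A\cap V_1(G)|$, $\rho_G^4=\max_{A\subseteq V(G)}\rho_G^4(A)$ (including $A=\emptyset$), and $\sigma_G^4=|V_1(G)|\bmod 2$. An equitable $4$-coloring is a proper vertex coloring with $4$ colors in which the sizes of any two color classes differ by at most $1$. *)

theory Defs
  imports "HOL-Analysis.Analysis"
begin

definition simple_graph :: "'a set \<Rightarrow> 'a set set \<Rightarrow> bool" where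
  "simple_graph V E \<longleftrightarrow> finite V \<and>
     (\<forall>e\<in>E. \<exists>u v. u \<in> V \<and> v \<in> V \<and> u \<noteq> v \<and> e = {u, v})"

definition degree :: "'a set set \<Rightarrow> 'a \<Rightarrow> nat" where
  "degree E v = card {e\<in>E. v \<in> e}"

definition V1 :: "'a set \<Rightarrow> 'a set set \<Rightarrow> 'a set" where
  "V1 V E = {v\<in>V. degree E v = 1}"

definition induced_edges :: "'a set set \<Rightarrow> 'a set \<Rightarrow> nat" where
  "induced_edges E A = card {e\<in>E. e \<subseteq> A}"

definition rho4_set :: "'a set \<Rightarrow> 'a set set \<Rightarrow> 'a set \<Rightarrow> int" where
  "rho4_set V E A = 4 * int (induced_edges E A) - 5 * int (card A) + 2 * int (card (A \<inter> V1 V E))"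

definition rho4 :: "'a set \<Rightarrow> 'a set set \<Rightarrow> int" where
  "rho4 V E = Max (rho4_set V E ` Pow V)"

definition sigma4 :: "'a set \<Rightarrow> 'a set set \<Rightarrow> int" where
  "sigma4 V E = int (card (V1 V E) mod 2)"

definition equitable_4_coloring :: "'a set \<Rightarrow> 'a set set \<Rightarrow> ('a \<Rightarrow> nat) \<Rightarrow> bool" where
  "equitable_4_coloring V E f \<longleftrightarrow>
     (\<forall>v\<in>V. f v < 4) \<and>
     (\<forall>u v. {u, v} \<in> E \<longrightarrow> f u \<noteq> f v) \<and>
     (\<forall>i<4. \<forall>j<4. card {v\<in>V. f v = i} \<le> card {v\<in>V. f v = j} + 1)"

text \<open>Outerplanar: there is a drawing in the plane (identified with \<complex>) with vertices as
  distinct points and edges as arcs joining their end points, arcs meeting only in common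
  end vertices and passing through no other vertex, such that every vertex lies on the
  boundary of the outer (unbounded) face.\<close>
definition outerplanar :: "'a set \<Rightarrow> 'a set set \<Rightarrow> bool" where
  "outerplanar V E \<longleftrightarrow>
     (\<exists>(p :: 'a \<Rightarrow> complex) (\<gamma> :: 'a set \<Rightarrow> real \<Rightarrow> complex).
        inj_on p V \<and>
        (\<forall>e\<in>E. arc (\<gamma> e) \<and> {pathstart (\<gamma> e), pathfinish (\<gamma> e)} = p ` e) \<and>
        (\<forall>e\<in>E. \<forall>v\<in>V. p v \<in> path_image (\<gamma> e) \<longrightarrow> v \<in> e) \<and>
        (\<forall>e\<in>E. \<forall>e'\<in>E. e \<noteq> e' \<longrightarrow>
             path_image (\<gamma> e) \<inter> path_image (\<gamma> e') \<subseteq> p ` (e \<inter> e')) \<and>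
        (\<forall>v\<in>V. p v \<in> closure (outside (p ` V \<union> (\<Union>e\<in>E. path_image (\<gamma> e))))))"

end

theory Submission
  imports Defs
begin

text \<open>The witness has a hub \<open>0\<close> adjacent to \<open>K\<close> vertices, where \<open>K \<in> {7, 8}\<close> and
  \<open>K \<equiv> l (mod 2)\<close>: \<open>l\<close> of them are leaves and the others are paired into triangles with
  the hub. In addition there are \<open>t\<close> gadgets, each a triangle joined to the hub by a path of
  length two. In an equitable 4-colouring the colour class of the hub avoids its \<open>K\<close>
  neighbours and meets each gadget at most once, so it has at most \<open>t + 1\<close> of the
  \<open>K + 1 + 4 t\<close> vertices, which is too few.

  Counting every edge at its larger end point splits \<open>\<rho>\<^sub>4(A)\<close> into contributions of
  single vertices. If \<open>A\<close> contains the hub, a leaf contributes at most 1, a triangle at most 2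
  and a gadget at most 0 (otherwise every block contributes at most 0), so
  \<open>\<rho>\<^sub>4 = K - 5 = 3 - \<sigma>\<^sub>4\<close>, attained by the hub together with its neighbours.
  Outerplanarity: with the vertices on a parabola the edges are chords, and no two of them cross.\<close>

definition parabola :: "real \<Rightarrow> complex" where
  "parabola x = Complex x (x\<^sup>2)"

lemma parabola_inject: "parabola a = parabola b \<longleftrightarrow> a = b"
  by (auto simp: parabola_def complex_eq_iff)

lemma closed_segment_parabola:
  assumes "z \<in> closed_segment (parabola a) (parabola b)" "a \<le> b"
  shows "a \<le> Re z \<and> Re z \<le> b \<and> Im z = (a + b) * Re z - a * b"
proof -
  obtain u where u: "0 \<le> u" "u \<le> 1" "z = (1 - u) *\<^sub>R parabola a + u *\<^sub>R parabola b"
    using assms(1) unfolding closed_segment_def by auto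
  have re: "Re z = (1 - u) * a + u * b" and im: "Im z = (1 - u) * a\<^sup>2 + u * b\<^sup>2"
    using u(3) by (simp_all add: parabola_def)
  have "u * a \<le> u * b" "(1 - u) * a \<le> (1 - u) * b"
    using u assms(2) by (simp_all add: mult_left_mono)
  then show ?thesis
    unfolding re im by (simp add: algebra_simps power2_eq_square)
qed

lemma parabola_on_chord:
  assumes "parabola w \<in> closed_segment (parabola a) (parabola b)" "a \<le> b"
  shows "w = a \<or> w = b"
proof -
  have "w\<^sup>2 = (a + b) * w - a * b"
    using closed_segment_parabola[OF assms] by (simp add: parabola_def)
  then have "(w - a) * (w - b) = 0"
    by (simp add: algebra_simps power2_eq_square)
  then show ?thesis by simp
qed

lemma nested_chords_eq:
  fixes a b c d x :: real
  assumes "a \<le> c" "d \<le> b" "a < x" "x < b" "c < x" "x < d"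
    and "(x - a) * (b - x) = (x - c) * (d - x)"
  shows "a = c \<and> b = d"
proof -
  have "(c - a) * (b - x) + (x - c) * (b - d) = 0"
    using assms(7) by (simp add: algebra_simps)
  moreover have "(c - a) * (b - x) \<ge> 0" "(x - c) * (b - d) \<ge> 0"
    using assms by simp_all
  ultimately have "(c - a) * (b - x) = 0" "(x - c) * (b - d) = 0"
    by linarith+
  then show ?thesis using assms by simp
qed

text \<open>At a common point with abscissa \<open>x\<close> the chord equations give
  \<open>(x - a) (b - x) = (x - c) (d - x)\<close>; unless \<open>x\<close> is an end point, this forces the
  chords to cross or to coincide.\<close>
lemma parabola_chords_inter:
  assumes "a < b" "c < d" "\<not> (a < c \<and> c < b \<and> b < d)" "\<not> (c < a \<and> a < d \<and> d < b)"
    and "(a, b) \<noteq> (c, d)"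
    and "z \<in> closed_segment (parabola a) (parabola b)" "z \<in> closed_segment (parabola c) (parabola d)"
  shows "(z = parabola a \<and> (a = c \<or> a = d)) \<or> (z = parabola b \<and> (b = c \<or> b = d))"
proof -
  define x where "x = Re z"
  have ab: "a \<le> x" "x \<le> b" "Im z = (a + b) * x - a * b"
    using closed_segment_parabola[OF assms(6)] assms(1) x_def by auto
  have cd: "c \<le> x" "x \<le> d" "Im z = (c + d) * x - c * d"
    using closed_segment_parabola[OF assms(7)] assms(2) x_def by auto
  have eq: "(x - a) * (b - x) = (x - c) * (d - x)"
    using ab(3) cd(3) by (simp add: algebra_simps)
  have z: "z = Complex x (Im z)"
    using x_def by (simp add: complex_eq_iff)
  consider "x = a" | "x = b" | "a < x" "x < b"
    using ab by linarith
  then show ?thesis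
  proof cases
    case 1
    then have "(a - c) * (d - a) = 0" using eq by simp
    moreover have "z = parabola a"
      using 1 z ab(3) by (simp add: parabola_def algebra_simps power2_eq_square)
    ultimately show ?thesis by auto
  next
    case 2
    then have "(b - c) * (d - b) = 0" using eq by simp
    moreover have "z = parabola b"
      using 2 z ab(3) by (simp add: parabola_def algebra_simps power2_eq_square)
    ultimately show ?thesis by auto
  next
    case 3
    have "(x - a) * (b - x) > 0"
      using 3 by simp
    then have "(x - c) * (d - x) > 0"
      using eq by simp
    then have "x \<noteq> c" "x \<noteq> d"
      by (rule_tac [!] ccontr) simp_all
    then have cx: "c < x" "x < d"
      using cd by linarith+
    have "(a \<le> c \<and> d \<le> b) \<or> (c \<le> a \<and> b \<le> d)"
      using assms(3,4) 3 cx by auto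
    then have "a = c \<and> b = d"
      using nested_chords_eq[OF _ _ 3 cx eq] nested_chords_eq[OF _ _ cx 3 eq[symmetric]] by auto
    with assms(5) show ?thesis by simp
  qed
qed

definition parabola_epigraph :: "complex set" where
  "parabola_epigraph = {z. (Re z)\<^sup>2 \<le> Im z}"

lemma convex_parabola_epigraph: "convex parabola_epigraph"
  unfolding convex_def parabola_epigraph_def
proof (intro ballI allI impI, simp)
  fix x y :: complex and u w :: real
  assume h: "(Re x)\<^sup>2 \<le> Im x" "(Re y)\<^sup>2 \<le> Im y" "0 \<le> u" "0 \<le> w" "u + w = 1"
  have w: "w = 1 - u"
    using h(5) by simp
  have "(u * Re x + w * Re y)\<^sup>2 = u * (Re x)\<^sup>2 + w * (Re y)\<^sup>2 - u * w * (Re x - Re y)\<^sup>2"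
    unfolding w by (simp add: algebra_simps power2_eq_square)
  also have "\<dots> \<le> u * (Re x)\<^sup>2 + w * (Re y)\<^sup>2"
    using h by simp
  also have "\<dots> \<le> u * Im x + w * Im y"
    using h by (simp add: add_mono mult_left_mono)
  finally show "(u * Re x + w * Re y)\<^sup>2 \<le> u * Im x + w * Im y" .
qed

lemma chord_subset_parabola_epigraph:
  assumes "a \<le> b"
  shows "closed_segment (parabola a) (parabola b) \<subseteq> parabola_epigraph"
proof
  fix z assume "z \<in> closed_segment (parabola a) (parabola b)"
  from closed_segment_parabola[OF this assms]
  have z: "a \<le> Re z" "Re z \<le> b" "Im z = (a + b) * Re z - a * b"
    by auto
  then have "Im z - (Re z)\<^sup>2 = (Re z - a) * (b - Re z)"
    by (simp add: algebra_simps power2_eq_square)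
  moreover have "(Re z - a) * (b - Re z) \<ge> 0"
    using z by simp
  ultimately show "z \<in> parabola_epigraph"
    unfolding parabola_epigraph_def mem_Collect_eq by linarith
qed

lemma parabola_in_closure_outside:
  assumes "S \<subseteq> parabola_epigraph"
  shows "parabola a \<in> closure (outside S)"
proof -
  have "parabola a \<in> closure (- parabola_epigraph)"
    unfolding closure_approachable
  proof (intro allI impI)
    fix e :: real assume "e > 0"
    let ?y = "parabola a - \<i> * complex_of_real (e / 2)"
    have "?y \<in> - parabola_epigraph" "dist ?y (parabola a) < e"
      using \<open>e > 0\<close> by (simp_all add: parabola_def parabola_epigraph_def dist_norm norm_mult)
    then show "\<exists>y\<in>- parabola_epigraph. dist y (parabola a) < e" by blast
  qed
  moreover have "closure (- parabola_epigraph) \<subseteq> closure (outside S)"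
    by (intro closure_mono outside_subset_convex convex_parabola_epigraph assms)
  ultimately show ?thesis by blast
qed

lemma nat_chords_inter:
  fixes a b c d :: nat
  assumes "a < b" "c < d" "\<not> (a < c \<and> c < b \<and> b < d)" "\<not> (c < a \<and> a < d \<and> d < b)"
    and "(a, b) \<noteq> (c, d)"
  shows "closed_segment (parabola a) (parabola b) \<inter> closed_segment (parabola c) (parabola d)
    \<subseteq> (\<lambda>v. parabola (real v)) ` ({a, b} \<inter> {c, d})"
proof
  fix z assume "z \<in> closed_segment (parabola a) (parabola b) \<inter> closed_segment (parabola c) (parabola d)"
  with parabola_chords_inter[of a b c d z] assms
  have "(z = parabola a \<and> (a = c \<or> a = d)) \<or> (z = parabola b \<and> (b = c \<or> b = d))"
    by auto
  then show "z \<in> (\<lambda>v. parabola (real v)) ` ({a, b} \<inter> {c, d})" by auto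
qed

definition noncrossing :: "nat set set \<Rightarrow> bool" where
  "noncrossing E \<longleftrightarrow> (\<forall>a b c d. {a, b} \<in> E \<longrightarrow> {c, d} \<in> E \<longrightarrow> \<not> (a < c \<and> c < b \<and> b < d))"

lemma simple_graph_edgeE:
  fixes E :: "'a::linorder set set"
  assumes "simple_graph V E" "e \<in> E"
  obtains u v where "e = {u, v}" "u < v"
proof -
  obtain u v where e: "e = {u, v}" "u \<noteq> v"
    using assms unfolding simple_graph_def by blast
  show ?thesis
  proof (cases "u < v")
    case True
    then show ?thesis using e that by blast
  next
    case False
    have "e = {v, u}" "v < u"
      using e False by (simp_all add: insert_commute neq_iff)
    then show ?thesis using that by blast
  qed
qed

lemma noncrossingD:
  "noncrossing E \<Longrightarrow> {a, b} \<in> E \<Longrightarrow> {c, d} \<in> E \<Longrightarrow> \<not> (a < c \<and> c < b \<and> b < d)"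
  unfolding noncrossing_def by blast

text \<open>Vertices go to the parabola \<open>y = x\<^sup>2\<close> and edges to chords; the drawing lies in the
  convex epigraph, whose complement lies in the outer face.\<close>
theorem noncrossing_outerplanar:
  fixes V :: "nat set"
  assumes G: "simple_graph V E" and nc: "noncrossing E"
  shows "outerplanar V E"
proof -
  define p where "p v = parabola (real v)" for v
  define \<gamma> where "\<gamma> e = linepath (p (Min e)) (p (Max e))" for e
  have chord: "\<gamma> {u, v} = linepath (p u) (p v)" if "u < v" for u v
    using that unfolding \<gamma>_def by simp
  have p_inj: "inj_on p V"
    by (simp add: inj_on_def p_def parabola_inject)
  have ends: "arc (\<gamma> e) \<and> {pathstart (\<gamma> e), pathfinish (\<gamma> e)} = p ` e" if e: "e \<in> E" for e
  proof -
    obtain u v where "e = {u, v}" "u < v" using simple_graph_edgeE[OF G e] .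
    then show ?thesis by (simp add: chord p_def parabola_inject)
  qed
  have through: "v \<in> e" if e: "e \<in> E" and v: "p v \<in> path_image (\<gamma> e)" for e v
  proof -
    obtain a b where "e = {a, b}" "a < b" using simple_graph_edgeE[OF G e] .
    with v parabola_on_chord[of "real v" "real a" "real b"] show ?thesis
      by (simp add: chord p_def)
  qed
  have meet: "path_image (\<gamma> e) \<inter> path_image (\<gamma> e') \<subseteq> p ` (e \<inter> e')"
    if E: "e \<in> E" "e' \<in> E" and ne: "e \<noteq> e'" for e e'
  proof -
    obtain a b where e: "e = {a, b}" "a < b" using simple_graph_edgeE[OF G E(1)] .
    obtain c d where e': "e' = {c, d}" "c < d" using simple_graph_edgeE[OF G E(2)] .
    have "\<not> (a < c \<and> c < b \<and> b < d)" "\<not> (c < a \<and> a < d \<and> d < b)"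
      using noncrossingD[OF nc E(1)[unfolded e(1)] E(2)[unfolded e'(1)]]
        noncrossingD[OF nc E(2)[unfolded e'(1)] E(1)[unfolded e(1)]] by blast+
    moreover have "(a, b) \<noteq> (c, d)"
      using ne e e' by auto
    ultimately show ?thesis
      using nat_chords_inter[OF e(2) e'(2)] by (simp add: e e' chord p_def)
  qed
  let ?S = "p ` V \<union> (\<Union>e\<in>E. path_image (\<gamma> e))"
  have "?S \<subseteq> parabola_epigraph"
  proof -
    have "path_image (\<gamma> e) \<subseteq> parabola_epigraph" if e: "e \<in> E" for e
    proof -
      obtain a b where "e = {a, b}" "a < b" using simple_graph_edgeE[OF G e] .
      then show ?thesis using chord_subset_parabola_epigraph[of a b] by (simp add: chord p_def)
    qed
    then show ?thesis
      by (auto simp: p_def parabola_epigraph_def parabola_def)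
  qed
  then have outer: "p v \<in> closure (outside ?S)" for v
    unfolding p_def by (rule parabola_in_closure_outside)
  show ?thesis
    unfolding outerplanar_def
    by (intro exI[of _ p] exI[of _ \<gamma>] conjI ballI impI) (simp_all add: p_inj ends through meet outer)
qed

lemma sum_atLeastLessThan_blocks:
  "sum f {a..<a + m * (k::nat)} = (\<Sum>j<k. sum f {a + m * j..<a + m * j + m})"
proof (induction k)
  case 0
  then show ?case by simp
next
  case (Suc k)
  have "sum f {a..<a + m * Suc k} = sum f {a..<a + m * k} + sum f {a + m * k..<a + m * k + m}"
    by (subst sum.atLeastLessThan_concat[symmetric]) (auto simp: algebra_simps)
  then show ?case using Suc by simp
qed

lemma induced_edges_eq_sum_lower:
  fixes V :: "'a::linorder set"
  assumes E: "E = {{u, v} | u v. v \<in> V \<and> u \<in> N v}"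
    and lower_less: "\<And>u v. u \<in> N v \<Longrightarrow> u < v"
    and A: "finite A" "A \<subseteq> V"
  shows "induced_edges E A = (\<Sum>v\<in>A. card (N v \<inter> A))"
proof -
  let ?pair = "\<lambda>(v, u). {u, v}"
  have "{e\<in>E. e \<subseteq> A} = ?pair ` (SIGMA v:A. N v \<inter> A)"
    using A(2) unfolding E by auto
  moreover have "inj_on ?pair (SIGMA v:A. N v \<inter> A)"
  proof (rule inj_onI, clarify)
    fix v u v' u' assume "u \<in> N v" "u' \<in> N v'" "{u, v} = {u', v'}"
    moreover from this have "u < v" "u' < v'" by (simp_all add: lower_less)
    ultimately show "v = v' \<and> u = u'" by (auto simp: doubleton_eq_iff)
  qed
  ultimately have "induced_edges E A = card (SIGMA v:A. N v \<inter> A)"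
    unfolding induced_edges_def by (simp add: card_image)
  also have "\<dots> = (\<Sum>v\<in>A. card (N v \<inter> A))"
    using A(1) by simp
  finally show ?thesis .
qed

lemma rho4_set_eq_sum_lower:
  fixes V :: "'a::linorder set"
  assumes E: "E = {{u, v} | u v. v \<in> V \<and> u \<in> N v}"
    and lower_less: "\<And>u v. u \<in> N v \<Longrightarrow> u < v"
    and V: "finite V" and A: "A \<subseteq> V"
  shows "rho4_set V E A = (\<Sum>v\<in>V. if v \<in> A
           then 4 * int (card (N v \<inter> A)) - 5 + 2 * of_bool (v \<in> V1 V E) else 0)"
proof -
  have fin: "finite A" using V A by (rule rev_finite_subset)
  have "int (card (A \<inter> V1 V E)) = (\<Sum>v\<in>A. of_bool (v \<in> V1 V E))"
    using fin by (simp add: of_bool_def sum.If_cases Int_def)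
  moreover have "int (induced_edges E A) = (\<Sum>v\<in>A. int (card (N v \<inter> A)))"
    using induced_edges_eq_sum_lower[OF E lower_less fin A] by simp
  ultimately have "rho4_set V E A = (\<Sum>v\<in>A. 4 * int (card (N v \<inter> A)) - 5 + 2 * of_bool (v \<in> V1 V E))"
    unfolding rho4_set_def by (simp add: sum.distrib sum_subtractf sum_distrib_left)
  also have "\<dots> = (\<Sum>v\<in>V. if v \<in> A
           then 4 * int (card (N v \<inter> A)) - 5 + 2 * of_bool (v \<in> V1 V E) else 0)"
    using V A by (simp add: sum.If_cases Int_absorb1)
  finally show ?thesis .
qed

lemma equitable_4_coloring_card_le:
  assumes f: "equitable_4_coloring V E f" and V: "finite V" and c: "c < 4"
  shows "card V \<le> 4 * card {v\<in>V. f v = c} + 3"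
proof -
  define C where "C i = {v\<in>V. f v = i}" for i
  have "V = (\<Union>i<4. C i)"
    using f unfolding equitable_4_coloring_def C_def by auto
  also have "card \<dots> = (\<Sum>i<4. card (C i))"
    by (rule card_UN_disjoint) (use V in \<open>auto simp: C_def\<close>)
  finally have "card V = (\<Sum>i<4. card (C i))" .
  also have "\<dots> = card (C c) + (\<Sum>i\<in>{..<4} - {c}. card (C i))"
    using c by (simp add: sum.remove)
  also have "\<dots> \<le> card (C c) + (\<Sum>i\<in>{..<4} - {c}. card (C c) + 1)"
    using f c unfolding equitable_4_coloring_def C_def by (intro add_left_mono sum_mono) auto
  also have "\<dots> = 4 * card (C c) + 3"
    using c by simp
  finally show ?thesis unfolding C_def .
qed

lemma degree_neq_1:
  assumes "finite E" "e \<in> E" "e' \<in> E" "v \<in> e" "v \<in> e'" "e \<noteq> e'"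
  shows "degree E v \<noteq> 1"
proof -
  have "card {e, e'} \<le> degree E v"
    unfolding degree_def by (rule card_mono) (use assms in auto)
  then show ?thesis using assms(6) by simp
qed

text \<open>Vertex \<open>0\<close> is the hub, adjacent to \<open>1, \<dots>, K\<close>; the vertices \<open>1, \<dots>, l\<close> are
  leaves, and for \<open>i < p\<close> the vertices \<open>l + 2 i + 1\<close>, \<open>l + 2 i + 2\<close> form a triangle with
  the hub. Gadget \<open>j\<close> is the path \<open>0, root j, root j + 1\<close> followed by the triangle on
  \<open>root j + 1, root j + 2, root j + 3\<close>. The set \<open>lower v\<close> consists of the neighbours of
  \<open>v\<close> below \<open>v\<close>.\<close>
locale fan_gadget_graph =
  fixes l p t :: nat
  assumes fan_large: "7 \<le> l + 2 * p"
begin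

abbreviation K :: nat where "K \<equiv> l + 2 * p"

definition order :: nat where "order = Suc K + 4 * t"

definition root :: "nat \<Rightarrow> nat" where "root j = Suc K + 4 * j"

definition lower :: "nat \<Rightarrow> nat set" where
  "lower v =
    (if v = 0 then {}
     else if v \<le> l then {0}
     else if v \<le> K then (if even (v - l) then {0, v - 1} else {0})
     else if (v - Suc K) mod 4 = 0 then {0}
     else if (v - Suc K) mod 4 = 3 then {v - 2, v - 1}
     else {v - 1})"

definition verts :: "nat set" where "verts = {..<order}"

definition edges :: "nat set set" where
  "edges = {{u, v} | u v. v \<in> verts \<and> u \<in> lower v}"

lemma lower_less: "u \<in> lower v \<Longrightarrow> u < v"
  unfolding lower_def by (auto split: if_splits)

lemma lower_hub: "lower 0 = {}"
  by (simp add: lower_def)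

lemma lower_leaf: "1 \<le> v \<Longrightarrow> v \<le> l \<Longrightarrow> lower v = {0}"
  by (simp add: lower_def)

lemma lower_pair:
  assumes "i < p"
  shows "lower (l + 2 * i + 1) = {0}" "lower (l + 2 * i + 2) = {0, l + 2 * i + 1}"
  using assms by (simp_all add: lower_def)

lemma root_gt: "K < root j"
  by (simp add: root_def)

lemma lower_root:
  assumes "r < 4"
  shows "lower (root j + r) =
    (if r = 0 then {0} else if r = 3 then {root j + r - 2, root j + r - 1} else {root j + r - 1})"
proof -
  have "(root j + r = 0) = False" "(root j + r \<le> l) = False" "(root j + r \<le> K) = False"
    "(root j + r - Suc K) mod 4 = r"
    using assms by (simp_all add: root_def)
  then show ?thesis
    unfolding lower_def by (simp only: if_False)
qed

lemma lower_gadget: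
  "lower (root j) = {0}" "lower (root j + 1) = {root j}"
  "lower (root j + 2) = {root j + 1}" "lower (root j + 3) = {root j + 1, root j + 2}"
  using lower_root[of 0 j] lower_root[of 1 j] lower_root[of 2 j] lower_root[of 3 j] by simp_all

lemma vertex_cases:
  assumes "v < order"
  obtains (hub) "v = 0"
    | (leaf) "1 \<le> v" "v \<le> l"
    | (pair1) i where "i < p" "v = l + 2 * i + 1"
    | (pair2) i where "i < p" "v = l + 2 * i + 2"
    | (gadget) j r where "j < t" "r < 4" "v = root j + r"
proof -
  consider "v = 0" | "1 \<le> v" "v \<le> l" | "l < v" "v \<le> K" | "K < v"
    by linarith
  then show ?thesis
  proof cases
    case 3
    define i where "i = (v - l - 1) div 2"
    have "i < p" "v = l + 2 * i + 1 \<or> v = l + 2 * i + 2"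
      using 3 unfolding i_def by linarith+
    then show ?thesis using pair1 pair2 by blast
  next
    case 4
    define j where "j = (v - Suc K) div 4"
    define r where "r = (v - Suc K) mod 4"
    have "v = root j + r" "r < 4"
      using 4 unfolding root_def j_def r_def by simp_all
    moreover have "j < t"
      using assms \<open>v = root j + r\<close> unfolding order_def root_def by linarith
    ultimately show ?thesis using gadget by blast
  qed (use hub leaf in auto)
qed

lemma edgesI: "u \<in> lower v \<Longrightarrow> v < order \<Longrightarrow> {u, v} \<in> edges"
  unfolding edges_def verts_def by blast

lemma root_less_order: "j < t \<Longrightarrow> root j + 3 < order"
  unfolding root_def order_def by simp

lemma hub_edge:
  assumes "1 \<le> v" "v \<le> K"
  shows "{0, v} \<in> edges"
proof (rule edgesI)
  show "0 \<in> lower v" using assms by (simp add: lower_def)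
  show "v < order" using assms by (simp add: order_def)
qed

lemma pair_edge: "i < p \<Longrightarrow> {l + 2 * i + 1, l + 2 * i + 2} \<in> edges"
  using lower_pair(2)[of i] by (intro edgesI) (simp_all add: order_def)

lemma gadget_edges:
  assumes "j < t"
  shows "{0, root j} \<in> edges" "{root j, root j + 1} \<in> edges" "{root j + 1, root j + 2} \<in> edges"
    "{root j + 1, root j + 3} \<in> edges" "{root j + 2, root j + 3} \<in> edges"
proof -
  have lt: "root j < order" "root j + 1 < order" "root j + 2 < order" "root j + 3 < order"
    using root_less_order[OF assms] by simp_all
  have "0 \<in> lower (root j)" "root j \<in> lower (root j + 1)" "root j + 1 \<in> lower (root j + 2)"
    "root j + 1 \<in> lower (root j + 3)" "root j + 2 \<in> lower (root j + 3)"
    unfolding lower_gadget by simp_all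
  from edgesI[OF this(1) lt(1)] edgesI[OF this(2) lt(2)] edgesI[OF this(3) lt(3)]
    edgesI[OF this(4) lt(4)] edgesI[OF this(5) lt(4)]
  show "{0, root j} \<in> edges" "{root j, root j + 1} \<in> edges" "{root j + 1, root j + 2} \<in> edges"
    "{root j + 1, root j + 3} \<in> edges" "{root j + 2, root j + 3} \<in> edges" .
qed

lemma edgeE:
  assumes "e \<in> edges"
  obtains (spoke) v where "1 \<le> v" "v \<le> K" "e = {0, v}"
    | (rung) i where "i < p" "e = {l + 2 * i + 1, l + 2 * i + 2}"
    | (in_gadget) j where "j < t" "e \<in> {{0, root j}, {root j, root j + 1}, {root j + 1, root j + 2},
        {root j + 1, root j + 3}, {root j + 2, root j + 3}}"
proof -
  obtain u v where e: "e = {u, v}" and u: "u \<in> lower v" and v: "v < order"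
    using assms unfolding edges_def verts_def by blast
  from v show ?thesis
  proof (cases rule: vertex_cases)
    case hub
    then show ?thesis using u by (simp add: lower_hub)
  next
    case leaf
    then show ?thesis using u e spoke[of v] by (simp add: lower_leaf)
  next
    case (pair1 i)
    then show ?thesis using u e spoke[of v] lower_pair(1)[of i] by simp
  next
    case (pair2 i)
    then show ?thesis using u e spoke[of v] rung[of i] lower_pair(2)[of i] by (auto simp: insert_commute)
  next
    case (gadget j r)
    from u have "u \<in> lower (root j + r)"
      unfolding gadget(3) .
    then have "u \<in> (if r = 0 then {0} else if r = 3 then {root j + r - 2, root j + r - 1}
      else {root j + r - 1})"
      unfolding lower_root[OF gadget(2)] .
    moreover have "r = 0 \<or> r = 1 \<or> r = 2 \<or> r = 3" using gadget(2) by auto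
    ultimately show ?thesis
      using e gadget(3) in_gadget[OF gadget(1)] by (auto simp: insert_commute)
  qed
qed

lemma finite_edges: "finite edges"
proof (rule finite_subset)
  show "edges \<subseteq> Pow verts"
    unfolding edges_def verts_def using lower_less by fastforce
qed (simp add: verts_def)

lemma simple_graph: "simple_graph verts edges"
  unfolding simple_graph_def
proof
  show "finite verts" by (simp add: verts_def)
  show "\<forall>e\<in>edges. \<exists>u v. u \<in> verts \<and> v \<in> verts \<and> u \<noteq> v \<and> e = {u, v}"
  proof
    fix e assume "e \<in> edges"
    then obtain u v where "e = {u, v}" "u \<in> lower v" "v \<in> verts"
      unfolding edges_def by blast
    moreover from this have "u < v" by (simp add: lower_less)
    ultimately show "\<exists>u v. u \<in> verts \<and> v \<in> verts \<and> u \<noteq> v \<and> e = {u, v}"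
      by (intro exI[of _ u] exI[of _ v]) (auto simp: verts_def)
  qed
qed

lemma long_edge:
  assumes "{u, v} \<in> edges" "u + 2 \<le> v"
  shows "u = 0 \<or> (\<exists>j<t. u = root j + 1 \<and> v = root j + 3)"
  using assms(1)
proof (cases rule: edgeE)
  case (in_gadget j)
  then show ?thesis using assms(2) by (auto simp: doubleton_eq_iff)
qed (use assms(2) in \<open>auto simp: doubleton_eq_iff\<close>)

lemma hub_neighbour:
  assumes "{0, v} \<in> edges"
  shows "v \<le> K \<or> (\<exists>j. v = root j)"
  using assms by (cases rule: edgeE) (auto simp: doubleton_eq_iff root_def)

lemma noncrossing: "noncrossing edges"
  unfolding noncrossing_def
proof (intro allI impI notI)
  fix a b c d
  assume ab: "{a, b} \<in> edges" and cd: "{c, d} \<in> edges" and cross: "a < c \<and> c < b \<and> b < d"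
  obtain j where "c = root j + 1" "d = root j + 3"
    using long_edge[OF cd] cross by auto
  then have b: "b = root j + 2" using cross by linarith
  have "b \<le> K \<or> (\<exists>j'. b = root j') \<or> (\<exists>j'. b = root j' + 3)"
    using long_edge[OF ab] hub_neighbour ab cross by auto
  then show False
    using b root_gt[of j] unfolding root_def by presburger
qed

lemma edges_at_leaf:
  assumes "1 \<le> w" "w \<le> l"
  shows "{e\<in>edges. w \<in> e} = {{0, w}}"
proof
  show "{{0, w}} \<subseteq> {e\<in>edges. w \<in> e}"
    using hub_edge[of w] assms by simp
  show "{e\<in>edges. w \<in> e} \<subseteq> {{0, w}}"
  proof clarify
    fix e assume "e \<in> edges" "w \<in> e"
    from \<open>e \<in> edges\<close> show "e = {0, w}"
      by (cases rule: edgeE) (use \<open>w \<in> e\<close> assms in \<open>auto simp: root_def\<close>)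
  qed
qed

lemma two_edges_at:
  assumes "w < order" "\<not> (1 \<le> w \<and> w \<le> l)"
  obtains e e' where "e \<in> edges" "e' \<in> edges" "w \<in> e" "w \<in> e'" "e \<noteq> e'"
  using assms(1)
proof (cases rule: vertex_cases)
  case hub
  then show ?thesis
    using that[of "{0, 1}" "{0, 2}"] hub_edge[of 1] hub_edge[of 2] fan_large
    by (simp add: doubleton_eq_iff)
next
  case leaf
  then show ?thesis using assms(2) by simp
next
  case (pair1 i)
  then show ?thesis
    using that[of "{0, w}" "{w, w + 1}"] hub_edge[of w] pair_edge[of i]
    by (simp add: doubleton_eq_iff)
next
  case (pair2 i)
  then show ?thesis
    using that[of "{0, w}" "{w - 1, w}"] hub_edge[of w] pair_edge[of i]
    by (simp add: doubleton_eq_iff)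
next
  case (gadget j r)
  note E = gadget_edges[OF \<open>j < t\<close>]
  have "r = 0 \<or> r = 1 \<or> r = 2 \<or> r = 3" using \<open>r < 4\<close> by auto
  then show ?thesis
  proof (elim disjE)
    assume "r = 0"
    then show ?thesis using that[OF E(1) E(2)] gadget root_gt by (simp add: doubleton_eq_iff)
  next
    assume "r = 1"
    then show ?thesis using that[OF E(2) E(3)] gadget by (simp add: doubleton_eq_iff)
  next
    assume "r = 2"
    then show ?thesis using that[OF E(3) E(5)] gadget by (simp add: doubleton_eq_iff)
  next
    assume "r = 3"
    then show ?thesis using that[OF E(4) E(5)] gadget by (simp add: doubleton_eq_iff)
  qed
qed

lemma V1_eq: "V1 verts edges = {1..l}"
proof (rule set_eqI)
  fix w
  have "l < order" by (simp add: order_def)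
  show "w \<in> V1 verts edges \<longleftrightarrow> w \<in> {1..l}"
  proof (cases "1 \<le> w \<and> w \<le> l")
    case True
    then show ?thesis
      using \<open>l < order\<close> edges_at_leaf[of w] by (simp add: V1_def degree_def verts_def)
  next
    case False
    have "degree edges w \<noteq> 1" if w: "w < order"
    proof -
      obtain e e' where "e \<in> edges" "e' \<in> edges" "w \<in> e" "w \<in> e'" "e \<noteq> e'"
        using two_edges_at[OF w False] .
      then show ?thesis by (rule degree_neq_1[OF finite_edges])
    qed
    then show ?thesis using False by (auto simp: V1_def verts_def)
  qed
qed

lemma gadget_triangle:
  assumes "j < t" "r \<in> {1, 2, 3}" "r' \<in> {1, 2, 3}" "r \<noteq> r'"
  shows "{root j + r, root j + r'} \<in> edges"
  using gadget_edges[OF assms(1)] assms(2-4) by (auto simp: insert_commute)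

lemma non_neighbour_of_hub:
  assumes "v < order" "v \<noteq> 0" "{0, v} \<notin> edges"
  obtains j r where "j < t" "r \<in> {1, 2, 3}" "v = root j + r"
  using assms(1)
proof (cases rule: vertex_cases)
  case (gadget j r)
  then have "r \<noteq> 0" using assms(3) gadget_edges(1)[of j] by (cases "r = 0") auto
  then have "r \<in> {1, 2, 3}" using \<open>r < 4\<close> by auto
  then show ?thesis using gadget that[of j r] by blast
qed (use assms(2,3) hub_edge[of v] in auto)

lemma card_hub_independent_le:
  assumes S: "S \<subseteq> verts" "0 \<in> S" and indep: "\<And>u v. u \<in> S \<Longrightarrow> v \<in> S \<Longrightarrow> {u, v} \<notin> edges"
  shows "card S \<le> Suc t"
proof -
  define g where "g v = (v - Suc K) div 4" for v
  have g: "g (root j + r) = j" if "r < 4" for j r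
    using that unfolding g_def root_def by simp
  have off_hub: "\<exists>j r. j < t \<and> r \<in> {1, 2, 3} \<and> v = root j + r" if v: "v \<in> S - {0}" for v
  proof -
    have "v < order" "v \<noteq> 0" "{0, v} \<notin> edges"
      using v S(1) indep[OF S(2), of v] by (auto simp: verts_def)
    then obtain j r where "j < t" "r \<in> {1, 2, 3}" "v = root j + r"
      by (rule non_neighbour_of_hub)
    then show ?thesis by blast
  qed
  have "inj_on g (S - {0})"
  proof (rule inj_onI)
    fix v v' assume v: "v \<in> S - {0}" and v': "v' \<in> S - {0}" and "g v = g v'"
    obtain j r where jr: "j < t" "r \<in> {1, 2, 3}" "v = root j + r" using off_hub[OF v] by blast
    obtain j' r' where jr': "r' \<in> {1, 2, 3}" "v' = root j' + r'" using off_hub[OF v'] by blast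
    have "r < 4" "r' < 4" using jr(2) jr'(1) by auto
    then have "j' = j" using \<open>g v = g v'\<close> g[of r j] g[of r' j'] jr(3) jr'(2) by simp
    show "v = v'"
    proof (rule ccontr)
      assume "v \<noteq> v'"
      then have "{v, v'} \<in> edges"
        using gadget_triangle[OF jr(1,2) jr'(1)] jr(3) jr'(2) \<open>j' = j\<close> by auto
      then show False using indep v v' by blast
    qed
  qed
  moreover have "g ` (S - {0}) \<subseteq> {..<t}"
  proof (rule image_subsetI)
    fix v assume "v \<in> S - {0}"
    then obtain j r where "j < t" "r \<in> {1, 2, 3}" "v = root j + r" using off_hub by blast
    then show "g v \<in> {..<t}" using g[of r j] by auto
  qed
  ultimately have "card (S - {0}) \<le> t"
    using card_inj_on_le[of g "S - {0}" "{..<t}"] by simp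
  moreover have "finite S" using S(1) by (simp add: verts_def finite_subset)
  ultimately show ?thesis using S(2) by (simp add: card_Diff_singleton)
qed

lemma no_equitable_4_coloring: "\<not> (\<exists>f. equitable_4_coloring verts edges f)"
proof
  assume "\<exists>f. equitable_4_coloring verts edges f"
  then obtain f where f: "equitable_4_coloring verts edges f" ..
  let ?S = "{v\<in>verts. f v = f 0}"
  have proper: "f u \<noteq> f v" if "{u, v} \<in> edges" for u v
    using f that unfolding equitable_4_coloring_def by blast
  have "0 \<in> verts" by (simp add: verts_def order_def)
  then have "card ?S \<le> Suc t"
    by (intro card_hub_independent_le) (auto dest: proper)
  moreover have "card verts \<le> 4 * card ?S + 3"
    using f \<open>0 \<in> verts\<close> by (intro equitable_4_coloring_card_le) (auto simp: verts_def equitable_4_coloring_def)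
  ultimately show False
    using fan_large by (simp add: verts_def order_def)
qed

definition contrib :: "nat set \<Rightarrow> nat \<Rightarrow> int" where
  "contrib A v = (if v \<in> A then 4 * int (card (lower v \<inter> A)) - 5 + 2 * of_bool (v \<in> {1..l}) else 0)"

lemma rho4_set_eq_sum_contrib:
  assumes "A \<subseteq> verts"
  shows "rho4_set verts edges A = (\<Sum>v<order. contrib A v)"
  using rho4_set_eq_sum_lower[OF edges_def lower_less _ assms] unfolding V1_eq
  by (simp add: contrib_def verts_def)

lemma sum_vertex_blocks:
  "sum f {..<order} = f 0 + (\<Sum>i<l. f (i + 1)) + (\<Sum>i<p. f (l + 2 * i + 1) + f (l + 2 * i + 2))
     + (\<Sum>j<t. f (root j) + f (root j + 1) + f (root j + 2) + f (root j + 3))"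
proof -
  have two: "sum f {x..<x + 2} = f x + f (x + 1)" for x
    by (simp add: numeral_2_eq_2)
  have four: "sum f {x..<x + 4} = f x + f (x + 1) + f (x + 2) + f (x + 3)" for x
    by (simp add: numeral_eq_Suc add.assoc)
  have "sum f {0..<order} = sum f {0..<Suc K} + sum f {Suc K..<Suc K + 4 * t}"
    unfolding order_def by (rule sum.atLeastLessThan_concat[symmetric]) auto
  moreover have "sum f {0..<Suc K} = sum f {0..<1 + l} + sum f {1 + l..<1 + l + 2 * p}"
    unfolding Suc_eq_plus1_left add.assoc by (rule sum.atLeastLessThan_concat[symmetric]) auto
  moreover have "sum f {0..<1 + l} = f 0 + sum f {1..<1 + l * 1}"
    by (subst sum.atLeastLessThan_concat[symmetric, of 0 1]) auto
  moreover have "sum f {1..<1 + l * 1} = (\<Sum>i<l. f (i + 1))"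
    using sum_atLeastLessThan_blocks[of f 1 1 l] by simp
  moreover have "sum f {1 + l..<1 + l + 2 * p} = (\<Sum>i<p. f (l + 2 * i + 1) + f (l + 2 * i + 2))"
    unfolding sum_atLeastLessThan_blocks two by (simp add: algebra_simps)
  moreover have "sum f {Suc K..<Suc K + 4 * t} =
      (\<Sum>j<t. f (root j) + f (root j + 1) + f (root j + 2) + f (root j + 3))"
    unfolding sum_atLeastLessThan_blocks four root_def ..
  ultimately show ?thesis
    by (simp add: lessThan_atLeast0)
qed

lemma contrib_hub: "contrib A 0 = - 5 * of_bool (0 \<in> A)"
  by (simp add: contrib_def lower_hub)

lemma contrib_leaf:
  assumes "1 \<le> v" "v \<le> l"
  shows "contrib A v = of_bool (v \<in> A) * (4 * of_bool (0 \<in> A) - 3)"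
  using assms by (simp add: contrib_def lower_leaf)

lemma contrib_pair:
  assumes "i < p"
  defines "a \<equiv> l + 2 * i + 1"
  shows "contrib A a + contrib A (l + 2 * i + 2) =
    of_bool (a \<in> A) * (4 * of_bool (0 \<in> A) - 5)
    + of_bool (a + 1 \<in> A) * (4 * (of_bool (0 \<in> A) + of_bool (a \<in> A)) - 5)"
proof -
  have "a \<noteq> 0" "a \<notin> {1..l}" "a + 1 \<notin> {1..l}" "l + 2 * i + 2 = a + 1"
    by (simp_all add: a_def)
  then show ?thesis
    unfolding contrib_def lower_pair[OF assms(1), folded a_def]
    by (cases "0 \<in> A"; cases "a \<in> A") auto
qed

lemma contrib_gadget:
  fixes j :: nat
  defines "b \<equiv> root j"
  shows "contrib A b + contrib A (b + 1) + contrib A (b + 2) + contrib A (b + 3) =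
    of_bool (b \<in> A) * (4 * of_bool (0 \<in> A) - 5)
    + of_bool (b + 1 \<in> A) * (4 * of_bool (b \<in> A) - 5)
    + of_bool (b + 2 \<in> A) * (4 * of_bool (b + 1 \<in> A) - 5)
    + of_bool (b + 3 \<in> A) * (4 * (of_bool (b + 1 \<in> A) + of_bool (b + 2 \<in> A)) - 5)"
proof -
  have "b \<notin> {1..l}" "b + 1 \<notin> {1..l}" "b + 2 \<notin> {1..l}" "b + 3 \<notin> {1..l}" "b + 1 \<noteq> b + 2"
    using root_gt[of j] by (auto simp: b_def)
  then show ?thesis
    unfolding contrib_def b_def lower_gadget
    by (cases "b + 1 \<in> A"; cases "b + 2 \<in> A") (auto simp: b_def)
qed

lemma rho4_set_le:
  assumes "A \<subseteq> verts"
  shows "rho4_set verts edges A \<le> int K - 5"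
proof -
  define z :: int where "z = of_bool (0 \<in> A)"
  have leaf: "contrib A (i + 1) \<le> z" if "i < l" for i
    using that contrib_leaf[of "i + 1" A] unfolding z_def
    by (cases "i + 1 \<in> A"; cases "0 \<in> A") simp_all
  have pair: "contrib A (l + 2 * i + 1) + contrib A (l + 2 * i + 2) \<le> 2 * z" if "i < p" for i
    unfolding contrib_pair[OF that] z_def
    by (cases "l + 2 * i + 1 \<in> A"; cases "l + 2 * i + 1 + 1 \<in> A"; cases "0 \<in> A") simp_all
  have gadget: "contrib A (root j) + contrib A (root j + 1) + contrib A (root j + 2)
      + contrib A (root j + 3) \<le> 0" for j
    unfolding contrib_gadget
    by (cases "0 \<in> A"; cases "root j \<in> A"; cases "root j + 1 \<in> A"; cases "root j + 2 \<in> A";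
        cases "root j + 3 \<in> A") simp_all
  have "rho4_set verts edges A \<le> - 5 * z + (\<Sum>i<l. z) + (\<Sum>i<p. 2 * z) + (\<Sum>j<t. 0)"
    unfolding rho4_set_eq_sum_contrib[OF assms] sum_vertex_blocks contrib_hub z_def[symmetric]
    by (intro add_mono sum_mono order_refl) (use leaf pair gadget in auto)
  also have "\<dots> = z * (int K - 5)"
    by (simp add: algebra_simps)
  also have "\<dots> \<le> int K - 5"
    using fan_large by (simp add: z_def)
  finally show ?thesis .
qed

lemma rho4_set_fan: "rho4_set verts edges {0..K} = int K - 5"
proof -
  let ?A = "{0..K}"
  have "?A \<subseteq> verts" by (auto simp: verts_def order_def)
  moreover have "contrib ?A (i + 1) = 1" if "i < l" for i
    using that contrib_leaf[of "i + 1" ?A] by simp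
  moreover have "contrib ?A (l + 2 * i + 1) + contrib ?A (l + 2 * i + 2) = 2" if "i < p" for i
    using that contrib_pair[OF that, of ?A] by simp
  moreover have "contrib ?A (root j) + contrib ?A (root j + 1) + contrib ?A (root j + 2)
      + contrib ?A (root j + 3) = 0" for j
    using root_gt[of j] contrib_gadget[of ?A j] by simp
  ultimately show ?thesis
    by (simp add: rho4_set_eq_sum_contrib sum_vertex_blocks contrib_hub)
qed

lemma rho4_eq: "rho4 verts edges = int K - 5"
  unfolding rho4_def
proof (rule Max_eqI)
  show "finite (rho4_set verts edges ` Pow verts)" by (simp add: verts_def)
  show "y \<le> int K - 5" if "y \<in> rho4_set verts edges ` Pow verts" for y
    using that rho4_set_le by auto
  show "int K - 5 \<in> rho4_set verts edges ` Pow verts"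
    using rho4_set_fan by (intro rev_image_eqI[of "{0..K}"]) (auto simp: verts_def order_def)
qed

end

theorem mainTheorem4:
  fixes n l :: nat
  assumes "l \<le> 8"
  shows "\<exists>(V :: nat set) (E :: nat set set).
           simple_graph V E \<and> outerplanar V E \<and> card V > n \<and>
           card (V1 V E) = l \<and> rho4 V E = 3 - sigma4 V E \<and>
           \<not> (\<exists>f. equitable_4_coloring V E f)"
proof -
  define p where "p = (8 - l) div 2"
  have K: "l + 2 * p = 8 - l mod 2"
    using assms unfolding p_def by presburger
  interpret G: fan_gadget_graph l p n
    by unfold_locales (use K in simp)
  have "rho4 G.verts G.edges = 3 - sigma4 G.verts G.edges"
    unfolding G.rho4_eq sigma4_def G.V1_eq using K by simp
  moreover have "n < card G.verts"
    by (simp add: G.verts_def G.order_def)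
  ultimately show ?thesis
    using G.simple_graph noncrossing_outerplanar[OF G.simple_graph G.noncrossing]
      G.V1_eq G.no_equitable_4_coloring
    by (intro exI[of _ G.verts] exI[of _ G.edges]) simp
qed

end
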